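(* Let $d\ge1$ and $s\in[0,d]$. There exists $\kappa_1>0$ such that for every nonempty open bounded set $E\subset\mathbb R^d$ there exists an absolutely continuous (with respect to Lebesgue measure) Borel probability measure $\eta$ with bounded density, whose support is a finite union of pairwise disjoint $d$-dimensional cubes contained in $E$, and such that \[ \varphi^s(E)\le \kappa_1\cdot\inf_{x\in E}\inf_{r>0}\frac{r^s}{\eta(E\cap B_r(x))}. \]
   Context: $B_r(x)$ denotes the open ball in $\mathbb R^d$ of center $x$ and radius $r$. For a Borel set $E\subset\mathbb R^d$ and $s\ge 0$, the generalized singular value function is $\varphi^s(E)=\sup_\mu \inf_{x\in E}\inf_{r>0} r^s/\mu(B_r(x))$, the supremum over Borel probability measures $\mu$ with $\mu(\mathbb R^d\setminus E)=0$. *)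

theory Defs
  imports "HOL-Probability.Probability"
begin

text \<open>Generalized singular value function
  phi^s(E) = sup over Borel probability measures mu with mu(R^d - E) = 0 of
  inf_{x in E} inf_{r>0} r^s / mu(B_r(x)), valued in [0,infinity]
  (r^s / 0 = infinity).\<close>
definition gsvf :: "real \<Rightarrow> 'a::euclidean_space set \<Rightarrow> ennreal" where
  "gsvf s E = (SUP \<mu> \<in> {\<mu>. sets \<mu> = sets borel \<and> prob_space \<mu> \<and> emeasure \<mu> (UNIV - E) = 0}.
      INF x\<in>E. INF r\<in>{0<..}. ennreal (r powr s) / emeasure \<mu> (ball x r))"

definition msupport :: "'a::metric_space measure \<Rightarrow> 'a set" where
  "msupport \<mu> = {x. \<forall>r>0. emeasure \<mu> (ball x r) > 0}"

definition is_cube :: "'a::euclidean_space set \<Rightarrow> bool" where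
  "is_cube Q \<longleftrightarrow> (\<exists>a l. l > 0 \<and> Q = cbox a (a + l *\<^sub>R One))"

end

theory Submission
  imports Defs
begin

text \<open>Fix an admissible \<open>\<mu>\<close> whose ratio is within a factor 2 of \<open>\<phi>\<^sup>s(E)\<close>. For small mesh \<open>\<delta>\<close>,
  the half-open grid cells whose closed cubes lie in \<open>E\<close> carry \<open>\<mu>\<close>-mass \<open>Z > 1/2\<close>. Spreading the
  mass of each such cell uniformly over the concentric closed cube of half the side, and dividing
  by \<open>Z\<close>, gives \<open>\<eta>\<close>. A ball \<open>B(x, r)\<close> meets only cores whose cells lie in \<open>B(x, r + d\<delta>)\<close>; hence
  \<open>\<eta>(B(x, r)) \<le> \<mu>(B(x, r + d\<delta>))/Z\<close>, and, the density being at most \<open>\<mu>(B(x, r + d\<delta>))/(Z (\<delta>/2)^d)\<close>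
  on these cores, also \<open>\<eta>(B(x, r)) \<le> \<mu>(B(x, r + d\<delta>))/Z \<cdot> (4r/\<delta>)^d\<close>. The first bound handles
  \<open>r \<ge> \<delta>\<close> via \<open>(r + d\<delta>)^s \<le> (1 + d)^s r^s\<close>, the second \<open>r < \<delta>\<close> via \<open>(r/\<delta>)^d \<le> (r/\<delta>)^s\<close> for \<open>s \<le> d\<close>.\<close>

lemma emeasure_density_sum_indicator:
  assumes "finite J" "\<And>k. k \<in> J \<Longrightarrow> 0 \<le> w k" "\<And>k. k \<in> J \<Longrightarrow> S k \<in> sets M"
    and "\<And>k. k \<in> J \<Longrightarrow> emeasure M (S k) < \<infinity>" and "A \<in> sets M"
  shows "emeasure (density M (\<lambda>x. ennreal (\<Sum>k\<in>J. w k * indicator (S k) x))) A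
       = ennreal (\<Sum>k\<in>J. w k * measure M (S k \<inter> A))"
proof -
  have S_Int_A: "S k \<inter> A \<in> sets M" if "k \<in> J" for k
    using assms(3,5) that by auto
  have finite_S_Int_A: "emeasure M (S k \<inter> A) \<noteq> \<infinity>" if "k \<in> J" for k
  proof -
    have "emeasure M (S k \<inter> A) \<le> emeasure M (S k)"
      using assms(3) that by (intro emeasure_mono) auto
    then show ?thesis
      using assms(4)[OF that] by auto
  qed
  have "(\<lambda>x. \<Sum>k\<in>J. w k * indicator (S k) x) \<in> borel_measurable M"
    using assms(3) by (intro borel_measurable_sum borel_measurable_times) auto
  then have "emeasure (density M (\<lambda>x. ennreal (\<Sum>k\<in>J. w k * indicator (S k) x))) A
      = (\<integral>\<^sup>+ x. ennreal (\<Sum>k\<in>J. w k * indicator (S k) x) * indicator A x \<partial>M)"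
    using assms(5) by (intro emeasure_density) auto
  also have "\<dots> = (\<integral>\<^sup>+ x. (\<Sum>k\<in>J. ennreal (w k) * indicator (S k \<inter> A) x) \<partial>M)"
  proof (rule nn_integral_cong)
    fix x
    have "ennreal (\<Sum>k\<in>J. w k * indicator (S k) x) * indicator A x
        = ennreal (\<Sum>k\<in>J. w k * indicator (S k \<inter> A) x)"
      by (simp add: indicator_def)
    also have "\<dots> = (\<Sum>k\<in>J. ennreal (w k) * indicator (S k \<inter> A) x)"
      using assms(2) by (simp add: ennreal_mult' ennreal_indicator flip: sum_ennreal)
    finally show "ennreal (\<Sum>k\<in>J. w k * indicator (S k) x) * indicator A x
        = (\<Sum>k\<in>J. ennreal (w k) * indicator (S k \<inter> A) x)" .
  qed
  also have "\<dots> = (\<Sum>k\<in>J. ennreal (w k) * emeasure M (S k \<inter> A))"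
    using S_Int_A by (simp add: nn_integral_sum nn_integral_cmult_indicator)
  also have "\<dots> = ennreal (\<Sum>k\<in>J. w k * measure M (S k \<inter> A))"
    using assms(2) finite_S_Int_A
    by (simp add: emeasure_eq_ennreal_measure ennreal_mult sum_ennreal flip: sum_ennreal)
  finally show ?thesis .
qed

lemma msupport_density_sum_indicator:
  fixes S :: "'k \<Rightarrow> 'a::euclidean_space set"
  assumes "finite J" "\<And>k. k \<in> J \<Longrightarrow> 0 < w k" "\<And>k. k \<in> J \<Longrightarrow> compact (S k)"
    and "\<And>k x r. k \<in> J \<Longrightarrow> x \<in> S k \<Longrightarrow> 0 < r \<Longrightarrow> 0 < measure lborel (S k \<inter> ball x r)"
  shows "msupport (density lborel (\<lambda>x. ennreal (\<Sum>k\<in>J. w k * indicator (S k) x))) = (\<Union>k\<in>J. S k)"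
proof -
  have mass_ball: "emeasure (density lborel (\<lambda>x. ennreal (\<Sum>k\<in>J. w k * indicator (S k) x))) (ball x r)
      = ennreal (\<Sum>k\<in>J. w k * measure lborel (S k \<inter> ball x r))" for x r
    using assms(1-3) emeasure_compact_finite by (intro emeasure_density_sum_indicator)
      (auto simp: less_imp_le compact_imp_closed)
  show ?thesis
  proof (intro equalityI subsetI)
    fix x assume "x \<in> msupport (density lborel (\<lambda>x. ennreal (\<Sum>k\<in>J. w k * indicator (S k) x)))"
    then have charged: "0 < (\<Sum>k\<in>J. w k * measure lborel (S k \<inter> ball x r))" if "0 < r" for r
      using that by (auto simp: msupport_def mass_ball)
    show "x \<in> (\<Union>k\<in>J. S k)"
    proof (rule ccontr)
      assume "x \<notin> (\<Union>k\<in>J. S k)"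
      moreover have "closed (\<Union>k\<in>J. S k)"
        using assms(1,3) by (auto intro: compact_imp_closed)
      ultimately obtain r where "0 < r" "ball x r \<inter> (\<Union>k\<in>J. S k) = {}"
        by (metis open_Compl open_contains_ball_eq Compl_iff disjoint_eq_subset_Compl)
      then have "S k \<inter> ball x r = {}" if "k \<in> J" for k
        using that by blast
      then have "(\<Sum>k\<in>J. w k * measure lborel (S k \<inter> ball x r)) = 0"
        by (intro sum.neutral) simp
      with charged[OF \<open>0 < r\<close>] show False
        by simp
    qed
  next
    fix x assume "x \<in> (\<Union>k\<in>J. S k)"
    then obtain j where j: "j \<in> J" "x \<in> S j"
      by blast
    have "0 < (\<Sum>k\<in>J. w k * measure lborel (S k \<inter> ball x r))" if "0 < r" for r
    proof -
      have "0 < w j * measure lborel (S j \<inter> ball x r)"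
        using assms(2,4) j that by simp
      also have "\<dots> \<le> (\<Sum>k\<in>J. w k * measure lborel (S k \<inter> ball x r))"
        using assms(1,2) j(1) by (intro member_le_sum) (auto simp: less_imp_le)
      finally show ?thesis .
    qed
    then show "x \<in> msupport (density lborel (\<lambda>x. ennreal (\<Sum>k\<in>J. w k * indicator (S k) x)))"
      by (simp add: msupport_def mass_ball)
  qed
qed

lemma measure_cbox_Int_ball_pos:
  fixes a b x :: "'a::euclidean_space"
  assumes "box a b \<noteq> {}" "x \<in> cbox a b" "0 < r"
  shows "0 < measure lborel (cbox a b \<inter> ball x r)"
proof -
  have "ball x r \<inter> box a b \<noteq> {}"
    using assms open_Int_closure_eq_empty[of "ball x r" "box a b"] closure_box[OF assms(1)]
    by (metis centre_in_ball disjoint_iff open_ball)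
  then obtain y where "y \<in> ball x r \<inter> box a b"
    by blast
  then obtain e where e: "0 < e" "ball y e \<subseteq> ball x r \<inter> box a b"
    using open_contains_ball[of "ball x r \<inter> box a b"] by blast
  have "0 < measure lborel (ball y e)"
    using e(1) by (rule content_ball_pos)
  also have "\<dots> \<le> measure lborel (cbox a b \<inter> ball x r)"
  proof (rule measure_mono_fmeasurable)
    show "ball y e \<subseteq> cbox a b \<inter> ball x r"
      using e(2) box_subset_cbox by blast
    have "emeasure lborel (cbox a b \<inter> ball x r) \<le> emeasure lborel (cbox a b)"
      by (rule emeasure_mono) auto
    then show "cbox a b \<inter> ball x r \<in> fmeasurable lborel"
      using emeasure_lborel_cbox_finite[of a b] by (auto simp: fmeasurable_def)
  qed auto
  finally show ?thesis .
qed

lemma measure_lborel_ball_le: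
  fixes x :: "'a::euclidean_space"
  assumes "0 < r"
  shows "measure lborel (ball x r) \<le> (2 * r) ^ DIM('a)"
proof -
  have "ball x r \<subseteq> cbox (x - r *\<^sub>R One) (x + r *\<^sub>R One)"
  proof
    fix y assume "y \<in> ball x r"
    then have "\<bar>(y - x) \<bullet> i\<bar> < r" if "i \<in> Basis" for i
      using Basis_le_norm[OF that, of "y - x"] by (simp add: dist_norm norm_minus_commute)
    then show "y \<in> cbox (x - r *\<^sub>R One) (x + r *\<^sub>R One)"
      by (fastforce simp: mem_box inner_diff_left inner_add_left abs_less_iff)
  qed
  then have "measure lborel (ball x r) \<le> measure lborel (cbox (x - r *\<^sub>R One) (x + r *\<^sub>R One))"
    by (intro measure_mono_fmeasurable) auto
  also have "\<dots> = (2 * r) ^ DIM('a)"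
    using assms by (simp add: content_cbox_cases inner_diff_left inner_add_left prod_constant)
  finally show ?thesis .
qed

lemma powr_radius_estimate:
  fixes s \<delta> r q :: real and n :: nat
  assumes s: "0 \<le> s" "s \<le> n" and "0 < \<delta>" "0 < r"
    and q: "0 \<le> q" "q \<le> 1" "q \<le> (4 * r / \<delta>) ^ n"
  shows "(r + n * \<delta>) powr s * q \<le> 4 ^ n * (1 + real n) powr s * r powr s"
proof (cases "\<delta> \<le> r")
  case True
  then have "(r + n * \<delta>) powr s \<le> ((1 + real n) * r) powr s"
    using \<open>0 < \<delta>\<close> s(1) by (intro powr_mono2) (auto simp: algebra_simps mult_right_mono)
  also have "\<dots> = (1 + real n) powr s * r powr s"
    using \<open>0 < r\<close> by (simp add: powr_mult)
  finally have "(r + n * \<delta>) powr s * q \<le> (1 + real n) powr s * r powr s * 1"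
    using q by (intro mult_mono) auto
  also have "\<dots> \<le> 4 ^ n * ((1 + real n) powr s * r powr s)"
    using mult_right_mono[of 1 "4 ^ n :: real" "(1 + real n) powr s * r powr s"] by simp
  finally show ?thesis
    by (simp add: mult.assoc)
next
  case False
  define t where "t = r / \<delta>"
  have t: "0 < t" "t \<le> 1"
    using False \<open>0 < r\<close> \<open>0 < \<delta>\<close> by (auto simp: t_def)
  have "(r + n * \<delta>) powr s \<le> ((1 + real n) * \<delta>) powr s"
    using False \<open>0 < r\<close> s(1) by (intro powr_mono2) (auto simp: algebra_simps)
  also have "\<dots> = (1 + real n) powr s * \<delta> powr s"
    using \<open>0 < \<delta>\<close> by (simp add: powr_mult)
  finally have radius: "(r + n * \<delta>) powr s \<le> (1 + real n) powr s * \<delta> powr s" .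
  have "q \<le> (4 * t) ^ n"
    using q(3) by (simp add: t_def)
  also have "\<dots> = 4 ^ n * t powr n"
    using t(1) by (simp add: powr_realpow power_mult_distrib)
  also have "\<dots> \<le> 4 ^ n * t powr s"
    using s t by (simp add: powr_mono')
  finally have "(r + n * \<delta>) powr s * q \<le> (1 + real n) powr s * \<delta> powr s * (4 ^ n * t powr s)"
    using radius q(1) by (intro mult_mono) auto
  also have "\<dots> = 4 ^ n * (1 + real n) powr s * (\<delta> * t) powr s"
    using \<open>0 < \<delta>\<close> t(1) by (simp add: powr_mult)
  also have "\<delta> * t = r"
    using \<open>0 < \<delta>\<close> by (simp add: t_def)
  finally show ?thesis .
qed

lemma ex_SUP_le_2_mult:
  fixes g :: "'b \<Rightarrow> ennreal"
  assumes "A \<noteq> {}" "(SUP i\<in>A. g i) < \<infinity>"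
  shows "\<exists>i\<in>A. (SUP i\<in>A. g i) \<le> 2 * g i"
proof (cases "(SUP i\<in>A. g i) = 0")
  case True
  then show ?thesis
    using assms(1) by auto
next
  case False
  obtain u where u: "(SUP i\<in>A. g i) = ennreal u" "0 < u"
    using assms(2) False by (cases "SUP i\<in>A. g i") (auto simp: ennreal_eq_0_iff)
  then have "ennreal (u / 2) < (SUP i\<in>A. g i)"
    by (simp add: ennreal_lessI)
  then obtain i where "i \<in> A" "ennreal (u / 2) < g i"
    by (auto simp: less_SUP_iff)
  moreover have "(SUP i\<in>A. g i) = ennreal 2 * ennreal (u / 2)"
    using u by (subst ennreal_mult[symmetric]) auto
  ultimately show ?thesis
    by (metis ennreal_numeral less_imp_le mult_left_mono zero_le)
qed

definition ball_ratio :: "real \<Rightarrow> 'a::metric_space measure \<Rightarrow> 'a set \<Rightarrow> ennreal" where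
  "ball_ratio s \<mu> E = (INF x\<in>E. INF r\<in>{0<..}. ennreal (r powr s) / emeasure \<mu> (ball x r))"

lemma ball_ratio_le:
  assumes "x \<in> E" "0 < r"
  shows "ball_ratio s \<mu> E \<le> ennreal (r powr s) / emeasure \<mu> (ball x r)"
  unfolding ball_ratio_def using assms by (auto intro!: INF_lower2)

lemma emeasure_eq_1_if_null_compl:
  assumes "prob_space \<mu>" "sets \<mu> = sets borel" "E \<in> sets borel" "emeasure \<mu> (UNIV - E) = 0"
  shows "emeasure \<mu> E = 1"
proof -
  have "AE y in \<mu>. y \<in> E"
    using assms by (intro AE_I'[of "UNIV - E"]) (auto simp: null_sets_def)
  then show ?thesis
    using assms by (intro prob_space.emeasure_eq_1_AE) auto
qed

lemma gsvf_le_radius_powr: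
  fixes E :: "'a::euclidean_space set"
  assumes "E \<in> sets borel" "x \<in> E" "E \<subseteq> ball x R"
  shows "gsvf s E \<le> ennreal (R powr s)"
  unfolding gsvf_def
proof (rule SUP_least, clarify)
  fix \<mu> :: "'a measure"
  assume \<mu>: "sets \<mu> = sets borel" "prob_space \<mu>" "emeasure \<mu> (UNIV - E) = 0"
  have "emeasure \<mu> E \<le> emeasure \<mu> (ball x R)"
    using \<mu>(1) assms(3) by (intro emeasure_mono) auto
  then have "emeasure \<mu> (ball x R) = 1"
    using emeasure_eq_1_if_null_compl[OF \<mu>(2,1) assms(1) \<mu>(3)] prob_space.emeasure_le_1[OF \<mu>(2)]
    by (metis antisym)
  moreover have "0 < R"
    using assms(2,3) by auto
  ultimately show "(INF y\<in>E. INF r\<in>{0<..}. ennreal (r powr s) / emeasure \<mu> (ball y r)) \<le> ennreal (R powr s)"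
    using ball_ratio_le[OF assms(2), of R s \<mu>] by (simp add: ball_ratio_def divide_ennreal_def)
qed

text \<open>Closed cubes of
  neighbouring cells touch, whereas their cores (concentric cubes of half the side) are disjoint.\<close>

definition grid_corner :: "real \<Rightarrow> ('a::euclidean_space \<Rightarrow> int) \<Rightarrow> 'a" where
  "grid_corner \<delta> k = (\<Sum>b\<in>Basis. (\<delta> * of_int (k b)) *\<^sub>R b)"

definition grid_cell :: "real \<Rightarrow> ('a::euclidean_space \<Rightarrow> int) \<Rightarrow> 'a set" where
  "grid_cell \<delta> k = {y. \<forall>b\<in>Basis. \<delta> * of_int (k b) \<le> y \<bullet> b \<and> y \<bullet> b < \<delta> * (of_int (k b) + 1)}"

definition grid_cube :: "real \<Rightarrow> ('a::euclidean_space \<Rightarrow> int) \<Rightarrow> 'a set" where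
  "grid_cube \<delta> k = cbox (grid_corner \<delta> k) (grid_corner \<delta> k + \<delta> *\<^sub>R One)"

definition grid_core :: "real \<Rightarrow> ('a::euclidean_space \<Rightarrow> int) \<Rightarrow> 'a set" where
  "grid_core \<delta> k = cbox (grid_corner \<delta> k + (\<delta>/4) *\<^sub>R One) (grid_corner \<delta> k + (3*\<delta>/4) *\<^sub>R One)"

definition grid_index :: "real \<Rightarrow> 'a::euclidean_space \<Rightarrow> ('a \<Rightarrow> int)" where
  "grid_index \<delta> y = restrict (\<lambda>b. \<lfloor>y \<bullet> b / \<delta>\<rfloor>) Basis"

definition inner_grid :: "real \<Rightarrow> 'a::euclidean_space set \<Rightarrow> ('a \<Rightarrow> int) set" where
  "inner_grid \<delta> E = {k \<in> Basis \<rightarrow>\<^sub>E UNIV. grid_cube \<delta> k \<subseteq> E}"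

lemma inner_grid_corner: "b \<in> Basis \<Longrightarrow> grid_corner \<delta> k \<bullet> b = \<delta> * of_int (k b)"
  by (simp add: grid_corner_def inner_sum_left inner_Basis if_distrib cong: if_cong)

lemma grid_index_PiE: "grid_index \<delta> y \<in> Basis \<rightarrow>\<^sub>E UNIV"
  by (simp add: grid_index_def)

lemma mem_grid_cell_grid_index:
  assumes "0 < \<delta>"
  shows "y \<in> grid_cell \<delta> (grid_index \<delta> y)"
  using floor_divide_lower[OF assms] floor_divide_upper[OF assms]
  by (simp add: grid_cell_def grid_index_def mult.commute)

lemma grid_cell_subset_cube: "grid_cell \<delta> k \<subseteq> grid_cube \<delta> k"
  by (fastforce simp: grid_cell_def grid_cube_def mem_box inner_grid_corner inner_add_left algebra_simps)

lemma grid_core_subset_cube: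
  assumes "0 < \<delta>"
  shows "grid_core \<delta> k \<subseteq> grid_cube \<delta> k"
  using assms by (force simp: grid_core_def grid_cube_def mem_box inner_add_left algebra_simps)

lemma dist_le_in_grid_cube:
  fixes y z :: "'a::euclidean_space" and \<delta> :: real
  assumes "y \<in> grid_cube \<delta> k" "z \<in> grid_cube \<delta> k"
  shows "dist y z \<le> DIM('a) * \<delta>"
proof -
  have "\<bar>(y - z) \<bullet> b\<bar> \<le> \<delta>" if "b \<in> Basis" for b
    using assms that by (fastforce simp: grid_cube_def mem_box inner_add_left inner_diff_left abs_le_iff)
  then have "(\<Sum>b\<in>Basis. \<bar>(y - z) \<bullet> b\<bar>) \<le> DIM('a) * \<delta>"
    using sum_mono[of Basis "\<lambda>b. \<bar>(y - z) \<bullet> b\<bar>" "\<lambda>_. \<delta>"] by simp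
  then show ?thesis
    unfolding dist_norm using norm_le_l1[of "y - z"] by linarith
qed

lemma grid_cube_grid_index_subset_cball:
  fixes \<delta> :: real
  assumes "0 < \<delta>"
  shows "grid_cube \<delta> (grid_index \<delta> y) \<subseteq> cball (y::'a::euclidean_space) (DIM('a) * \<delta>)"
  using dist_le_in_grid_cube grid_cell_subset_cube mem_grid_cell_grid_index[of \<delta> y] assms
  by (fastforce simp: subset_iff)

lemma grid_indices_apart:
  fixes \<delta> :: real
  assumes "k \<in> Basis \<rightarrow>\<^sub>E UNIV" "k' \<in> Basis \<rightarrow>\<^sub>E UNIV" "k \<noteq> k'" "0 < \<delta>"
  obtains b :: "'a::euclidean_space"
  where "b \<in> Basis" "\<delta> * (of_int (k b) + 1) \<le> \<delta> * of_int (k' b) \<or> \<delta> * (of_int (k' b) + 1) \<le> \<delta> * of_int (k b)"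
proof -
  obtain b :: 'a where b: "b \<in> Basis" "k b \<noteq> k' b"
    using assms(1-3) by (metis PiE_ext)
  then have "of_int (k b) + 1 \<le> (of_int (k' b) :: real) \<or> of_int (k' b) + 1 \<le> (of_int (k b) :: real)"
    by linarith
  with b(1) assms(4) show thesis
    by (intro that) (auto simp: mult_le_cancel_left_pos)
qed

lemma disjoint_grid_cells:
  assumes "k \<in> Basis \<rightarrow>\<^sub>E UNIV" "k' \<in> Basis \<rightarrow>\<^sub>E UNIV" "k \<noteq> k'" "0 < \<delta>"
  shows "grid_cell \<delta> k \<inter> grid_cell \<delta> (k' :: 'a::euclidean_space \<Rightarrow> int) = {}"
  using assms by (rule grid_indices_apart) (force simp: grid_cell_def)

lemma disjoint_grid_cores:
  assumes "k \<in> Basis \<rightarrow>\<^sub>E UNIV" "k' \<in> Basis \<rightarrow>\<^sub>E UNIV" "k \<noteq> k'" "0 < \<delta>"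
  shows "grid_core \<delta> k \<inter> grid_core \<delta> (k' :: 'a::euclidean_space \<Rightarrow> int) = {}"
proof -
  obtain b :: 'a where b: "b \<in> Basis"
    and apart: "\<delta> * (of_int (k b) + 1) \<le> \<delta> * of_int (k' b) \<or> \<delta> * (of_int (k' b) + 1) \<le> \<delta> * of_int (k b)"
    using assms by (rule grid_indices_apart)
  have "\<delta> * of_int (k b) + \<delta>/4 \<le> y \<bullet> b \<and> y \<bullet> b \<le> \<delta> * of_int (k b) + 3*\<delta>/4"
    if "y \<in> grid_core \<delta> k" for y
    using that b by (auto simp: grid_core_def mem_box inner_grid_corner inner_add_left)
  moreover have "\<delta> * of_int (k' b) + \<delta>/4 \<le> y \<bullet> b \<and> y \<bullet> b \<le> \<delta> * of_int (k' b) + 3*\<delta>/4"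
    if "y \<in> grid_core \<delta> k'" for y
    using that b by (auto simp: grid_core_def mem_box inner_grid_corner inner_add_left)
  ultimately show ?thesis
    using apart assms(4) by (fastforce simp: algebra_simps)
qed

lemma grid_cell_borel [measurable]: "grid_cell \<delta> k \<in> sets borel"
  unfolding grid_cell_def by measurable

lemma grid_core_borel [measurable]: "grid_core \<delta> k \<in> sets borel"
  unfolding grid_core_def by simp

lemma emeasure_grid_core:
  assumes "0 < \<delta>"
  shows "emeasure lborel (grid_core \<delta> (k :: 'a::euclidean_space \<Rightarrow> int)) = ennreal ((\<delta>/2) ^ DIM('a))"
  using assms by (simp add: grid_core_def emeasure_lborel_cbox_eq inner_add_left algebra_simps prod_constant)

lemma is_cube_grid_core:
  assumes "0 < \<delta>"
  shows "is_cube (grid_core \<delta> k)"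
  unfolding is_cube_def grid_core_def
proof (intro exI conjI)
  show "0 < \<delta>/2" using assms by simp
  show "cbox (grid_corner \<delta> k + (\<delta>/4) *\<^sub>R One) (grid_corner \<delta> k + (3*\<delta>/4) *\<^sub>R One)
      = cbox (grid_corner \<delta> k + (\<delta>/4) *\<^sub>R One) (grid_corner \<delta> k + (\<delta>/4) *\<^sub>R One + (\<delta>/2) *\<^sub>R (One :: 'a))"
    by (simp add: add.assoc flip: scaleR_add_left)
qed

lemma finite_inner_grid:
  assumes "bounded E" "0 < \<delta>"
  shows "finite (inner_grid \<delta> (E :: 'a::euclidean_space set))"
proof -
  obtain R where R: "\<forall>x\<in>E. norm x \<le> R"
    using assms(1) bounded_iff by blast
  define N where "N = \<lceil>R / \<delta>\<rceil>"
  have "k b \<in> {-N..N}" if k: "k \<in> inner_grid \<delta> E" and b: "b \<in> Basis" for k and b :: 'a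
  proof -
    have "grid_corner \<delta> k \<in> E"
      using k assms(2) by (auto simp: inner_grid_def grid_cube_def mem_box inner_add_left)
    then have "\<bar>\<delta> * of_int (k b)\<bar> \<le> R"
      using R Basis_le_norm[OF b, of "grid_corner \<delta> k"] b by (fastforce simp: inner_grid_corner)
    then have "\<bar>of_int (k b)\<bar> \<le> R / \<delta>"
      using assms(2) by (simp add: abs_mult le_divide_eq mult.commute)
    then have "\<bar>k b\<bar> \<le> N"
      unfolding N_def by linarith
    then show ?thesis by (simp add: abs_le_iff)
  qed
  then have "inner_grid \<delta> E \<subseteq> Basis \<rightarrow>\<^sub>E {-N..N}"
    by (auto simp: inner_grid_def PiE_def Pi_def)
  then show ?thesis
    by (rule finite_subset) (intro finite_PiE; simp)
qed

lemma grid_index_mem_inner_grid: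
  fixes \<delta> \<epsilon> :: real
  assumes "0 < \<delta>" "ball y \<epsilon> \<subseteq> E" "DIM('a) * \<delta> < \<epsilon>"
  shows "grid_index \<delta> (y :: 'a::euclidean_space) \<in> inner_grid \<delta> E"
  using grid_cube_grid_index_subset_cball[OF assms(1), of y] assms(2,3)
  by (fastforce simp: inner_grid_def grid_index_PiE)

text \<open>Grids of mesh \<open>1/(n+1)\<close> are not nested, so the sets covered at mesh \<open>1/(n+1)\<close> need not
  increase with \<open>n\<close>; continuity from below is applied to their lower limits instead.\<close>

lemma emeasure_inner_grid_approx:
  fixes E :: "'a::euclidean_space set"
  assumes "sets \<mu> = sets borel" "open E" "c < emeasure \<mu> E"
  obtains \<delta> where "0 < \<delta>" "c < emeasure \<mu> (\<Union>k\<in>inner_grid \<delta> E. grid_cell \<delta> k)"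
proof -
  define A where "A \<delta> = (\<Union>k\<in>inner_grid \<delta> E. grid_cell \<delta> k)" for \<delta>
  define B where "B m = (\<Inter>n\<in>{m..}. A (1 / (real n + 1)))" for m
  have A_sets: "A \<delta> \<in> sets \<mu>" for \<delta>
  proof -
    have "countable (inner_grid \<delta> E)"
      by (rule countable_subset[OF _ countable_PiE[of Basis "\<lambda>_. UNIV :: int set"]])
        (auto simp: inner_grid_def)
    then show ?thesis
      unfolding A_def assms(1) by (intro sets.countable_UN'') auto
  qed
  have B_sets: "B m \<in> sets \<mu>" for m
    unfolding B_def by (intro sets.countable_INT') (auto simp: A_sets)
  have "incseq B"
    unfolding incseq_def B_def by auto
  have E_subset: "E \<subseteq> (\<Union>m. B m)"
  proof
    fix y assume "y \<in> E"
    then obtain \<epsilon> where \<epsilon>: "0 < \<epsilon>" "ball y \<epsilon> \<subseteq> E"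
      using assms(2) open_contains_ball by blast
    obtain m :: nat where "DIM('a) / \<epsilon> < m"
      using reals_Archimedean2 by blast
    then have m: "DIM('a) < \<epsilon> * m"
      using \<epsilon>(1) by (simp add: field_simps)
    have "y \<in> A (1 / (real n + 1))" if "m \<le> n" for n
    proof -
      have "\<epsilon> * m \<le> \<epsilon> * n"
        using that \<epsilon>(1) by simp
      then have "DIM('a) < \<epsilon> * n + \<epsilon>"
        using m \<epsilon>(1) by linarith
      then have "DIM('a) * (1 / (real n + 1)) < \<epsilon>"
        by (simp add: field_simps)
      moreover have "0 < 1 / (real n + 1)"
        by simp
      ultimately show ?thesis
        unfolding A_def using grid_index_mem_inner_grid[OF _ \<epsilon>(2)] mem_grid_cell_grid_index by blast
    qed
    then show "y \<in> (\<Union>m. B m)"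
      unfolding B_def by blast
  qed
  have "c < emeasure \<mu> E" by fact
  also have "\<dots> \<le> emeasure \<mu> (\<Union>m. B m)"
    using E_subset B_sets by (intro emeasure_mono) auto
  also have "\<dots> = (SUP m. emeasure \<mu> (B m))"
    using B_sets \<open>incseq B\<close> by (intro SUP_emeasure_incseq[symmetric]) auto
  finally obtain m where "c < emeasure \<mu> (B m)"
    by (auto simp: less_SUP_iff)
  also have "\<dots> \<le> emeasure \<mu> (A (1 / (real m + 1)))"
    using A_sets by (intro emeasure_mono) (auto simp: B_def)
  finally show thesis
    unfolding A_def by (intro that[of "1 / (real m + 1)"]) auto
qed

locale grid_reweighting = prob_space \<mu> for \<mu> :: "'a::euclidean_space measure" +
  fixes \<delta> :: real and I :: "('a \<Rightarrow> int) set"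
  assumes sets_eq_borel: "sets \<mu> = sets borel"
    and mesh_pos: "0 < \<delta>" and finite_I: "finite I" and I_PiE: "I \<subseteq> Basis \<rightarrow>\<^sub>E UNIV"
    and half_mass: "ennreal (1/2) < emeasure \<mu> (\<Union>k\<in>I. grid_cell \<delta> k)"
begin

definition cell_mass :: "('a \<Rightarrow> int) \<Rightarrow> real" where
  "cell_mass k = measure \<mu> (grid_cell \<delta> k)"

definition charged :: "('a \<Rightarrow> int) set" where
  "charged = {k \<in> I. 0 < cell_mass k}"

definition charged_mass :: real where
  "charged_mass = (\<Sum>k\<in>charged. cell_mass k)"

text \<open>The weight is chosen so that the core of cell \<open>k\<close> receives mass \<open>cell_mass k / charged_mass\<close>.\<close>

definition core_weight :: "('a \<Rightarrow> int) \<Rightarrow> real" where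
  "core_weight k = cell_mass k / (charged_mass * (\<delta>/2) ^ DIM('a))"

definition core_density :: "'a \<Rightarrow> real" where
  "core_density y = (\<Sum>k\<in>charged. core_weight k * indicator (grid_core \<delta> k) y)"

abbreviation reweighted :: "'a measure" where
  "reweighted \<equiv> density lborel (\<lambda>y. ennreal (core_density y))"

definition cores_meeting_ball :: "'a \<Rightarrow> real \<Rightarrow> ('a \<Rightarrow> int) set" where
  "cores_meeting_ball x r = {k \<in> charged. grid_core \<delta> k \<inter> ball x r \<noteq> {}}"

lemma grid_cell_sets [measurable]: "grid_cell \<delta> (k :: 'a \<Rightarrow> int) \<in> sets \<mu>"
  using sets_eq_borel by simp

lemma finite_charged: "finite charged"
  using finite_I by (simp add: charged_def)

lemma charged_subset: "charged \<subseteq> I"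
  by (auto simp: charged_def)

lemma measure_Union_grid_cells:
  assumes "J \<subseteq> I"
  shows "measure \<mu> (\<Union>k\<in>J. grid_cell \<delta> k) = (\<Sum>k\<in>J. cell_mass k)"
  unfolding cell_mass_def
proof (rule measure_finite_Union)
  show "finite J"
    using assms finite_I by (rule finite_subset)
  show "disjoint_family_on (grid_cell \<delta>) J"
    unfolding disjoint_family_on_def
  proof (intro ballI impI)
    fix m n assume "m \<in> J" "n \<in> J" "m \<noteq> n"
    then show "grid_cell \<delta> m \<inter> grid_cell \<delta> n = {}"
      using assms I_PiE by (intro disjoint_grid_cells[OF _ _ _ mesh_pos]) auto
  qed
qed (simp_all add: image_subset_iff)

lemma charged_mass_gt_half: "1/2 < charged_mass"
proof -
  have "ennreal (1/2) < ennreal (measure \<mu> (\<Union>k\<in>I. grid_cell \<delta> k))"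
    using half_mass by (simp only: emeasure_eq_measure)
  then have "1/2 < measure \<mu> (\<Union>k\<in>I. grid_cell \<delta> k)"
    by (rule ennreal_less_iff[THEN iffD1, rotated]) simp
  also have "\<dots> = (\<Sum>k\<in>I. cell_mass k)"
    by (rule measure_Union_grid_cells) simp
  also have "\<dots> = charged_mass"
    unfolding charged_mass_def using finite_I
    by (intro sum.mono_neutral_right) (auto simp: charged_def cell_mass_def less_le)
  finally show ?thesis .
qed

lemma core_weight_nonneg: "0 \<le> core_weight k"
  using charged_mass_gt_half mesh_pos by (simp add: core_weight_def cell_mass_def)

lemma core_weight_pos: "k \<in> charged \<Longrightarrow> 0 < core_weight k"
  using charged_mass_gt_half mesh_pos by (simp add: core_weight_def charged_def)

lemma measure_grid_core: "measure lborel (grid_core \<delta> (k :: 'a \<Rightarrow> int)) = (\<delta>/2) ^ DIM('a)"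
  using emeasure_grid_core[OF mesh_pos, of k] mesh_pos by (simp add: measure_def)

lemma emeasure_reweighted:
  assumes "A \<in> sets borel"
  shows "emeasure reweighted A = ennreal (\<Sum>k\<in>charged. core_weight k * measure lborel (grid_core \<delta> k \<inter> A))"
  unfolding core_density_def using assms
  by (intro emeasure_density_sum_indicator)
    (auto simp: finite_charged core_weight_nonneg emeasure_grid_core[OF mesh_pos])

lemma measure_reweighted:
  assumes "A \<in> sets borel"
  shows "measure reweighted A = (\<Sum>k\<in>charged. core_weight k * measure lborel (grid_core \<delta> k \<inter> A))"
  using emeasure_reweighted[OF assms] core_weight_nonneg
  by (simp add: measure_def sum_nonneg)

lemma prob_space_reweighted: "prob_space reweighted"
proof
  have "(\<Sum>k\<in>charged. core_weight k * measure lborel (grid_core \<delta> k \<inter> UNIV))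
      = (\<Sum>k\<in>charged. cell_mass k / charged_mass)"
    using mesh_pos by (intro sum.cong) (simp_all add: measure_grid_core core_weight_def)
  also have "\<dots> = 1"
    using charged_mass_gt_half by (simp add: charged_mass_def flip: sum_divide_distrib)
  finally have "emeasure reweighted UNIV = 1"
    by (subst emeasure_reweighted) simp_all
  then show "emeasure reweighted (space reweighted) = 1"
    by (simp only: space_density space_lborel space_borel)
qed

lemma msupport_reweighted: "msupport reweighted = (\<Union>k\<in>charged. grid_core \<delta> k)"
  unfolding core_density_def
proof (rule msupport_density_sum_indicator)
  fix k :: "'a \<Rightarrow> int" and x and r :: real
  assume x: "x \<in> grid_core \<delta> k" and r: "0 < r"
  have "box (grid_corner \<delta> k + (\<delta>/4) *\<^sub>R One) (grid_corner \<delta> k + (3*\<delta>/4) *\<^sub>R (One :: 'a)) \<noteq> {}"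
    using mesh_pos by (simp add: box_ne_empty inner_add_left)
  then show "0 < measure lborel (grid_core \<delta> k \<inter> ball x r)"
    using x r unfolding grid_core_def by (rule measure_cbox_Int_ball_pos)
qed (simp_all add: finite_charged core_weight_pos grid_core_def)

lemma core_density_nonneg: "0 \<le> core_density y"
  unfolding core_density_def by (intro sum_nonneg mult_nonneg_nonneg core_weight_nonneg) simp

lemma core_density_measurable: "core_density \<in> borel_measurable lborel"
  unfolding core_density_def grid_core_def by measurable

lemma bounded_range_core_density: "bounded (range core_density)"
proof -
  have "core_density y \<le> (\<Sum>k\<in>charged. core_weight k)" for y
    unfolding core_density_def
    by (intro sum_mono) (auto simp: indicator_def core_weight_nonneg)
  then show ?thesis
    using core_density_nonneg by (intro boundedI[of _ "\<Sum>k\<in>charged. core_weight k"]) auto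
qed

lemma finite_cores_meeting_ball: "finite (cores_meeting_ball x r)"
  using finite_charged by (simp add: cores_meeting_ball_def)

lemma measure_reweighted_ball:
  "measure reweighted (ball x r)
     = (\<Sum>k\<in>cores_meeting_ball x r. core_weight k * measure lborel (grid_core \<delta> k \<inter> ball x r))"
  unfolding measure_reweighted[OF borel_open[OF open_ball]]
  using finite_charged by (intro sum.mono_neutral_right) (auto simp: cores_meeting_ball_def)

lemma sum_cell_mass_cores_meeting_ball:
  "(\<Sum>k\<in>cores_meeting_ball x r. cell_mass k) \<le> measure \<mu> (ball x (r + DIM('a) * \<delta>))"
proof -
  have "grid_cell \<delta> k \<subseteq> ball x (r + DIM('a) * \<delta>)" if k: "k \<in> cores_meeting_ball x r" for k
  proof
    fix z assume z: "z \<in> grid_cell \<delta> k"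
    obtain y where y: "y \<in> grid_core \<delta> k" "dist x y < r"
      using k by (auto simp: cores_meeting_ball_def)
    have "y \<in> grid_cube \<delta> k" "z \<in> grid_cube \<delta> k"
      using y(1) z grid_core_subset_cube[OF mesh_pos] grid_cell_subset_cube by blast+
    then have "dist y z \<le> DIM('a) * \<delta>"
      by (rule dist_le_in_grid_cube)
    then show "z \<in> ball x (r + DIM('a) * \<delta>)"
      using y(2) dist_triangle[of x z y] by simp
  qed
  then have "measure \<mu> (\<Union>k\<in>cores_meeting_ball x r. grid_cell \<delta> k) \<le> measure \<mu> (ball x (r + DIM('a) * \<delta>))"
    by (intro finite_measure_mono) (auto simp: sets_eq_borel)
  moreover have "cores_meeting_ball x r \<subseteq> I"
    using charged_subset by (auto simp: cores_meeting_ball_def)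
  ultimately show ?thesis
    by (simp add: measure_Union_grid_cells)
qed

lemma measure_reweighted_ball_le:
  "measure reweighted (ball x r) \<le> measure \<mu> (ball x (r + DIM('a) * \<delta>)) / charged_mass"
proof -
  have "measure reweighted (ball x r) \<le> (\<Sum>k\<in>cores_meeting_ball x r. core_weight k * (\<delta>/2) ^ DIM('a))"
    unfolding measure_reweighted_ball
  proof (intro sum_mono mult_left_mono)
    fix k
    show "measure lborel (grid_core \<delta> k \<inter> ball x r) \<le> (\<delta>/2) ^ DIM('a)"
      unfolding measure_grid_core[symmetric, of k]
      by (intro measure_mono_fmeasurable) (auto simp: fmeasurable_def emeasure_grid_core[OF mesh_pos])
  qed (rule core_weight_nonneg)
  also have "\<dots> = (\<Sum>k\<in>cores_meeting_ball x r. cell_mass k) / charged_mass"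
    using mesh_pos by (simp add: core_weight_def sum_divide_distrib)
  also have "\<dots> \<le> measure \<mu> (ball x (r + DIM('a) * \<delta>)) / charged_mass"
    using sum_cell_mass_cores_meeting_ball charged_mass_gt_half by (simp add: divide_right_mono)
  finally show ?thesis .
qed

lemma sum_measure_cores_Int_ball_le:
  assumes "0 < r"
  shows "(\<Sum>k\<in>cores_meeting_ball x r. measure lborel (grid_core \<delta> k \<inter> ball x r)) \<le> (2 * r) ^ DIM('a)"
proof -
  have "(\<Sum>k\<in>cores_meeting_ball x r. measure lborel (grid_core \<delta> k \<inter> ball x r))
      = measure lborel (\<Union>k\<in>cores_meeting_ball x r. grid_core \<delta> k \<inter> ball x r)"
  proof (rule measure_finite_Union[symmetric])
    show "finite (cores_meeting_ball x r)"
      by (rule finite_cores_meeting_ball)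
    show "disjoint_family_on (\<lambda>k. grid_core \<delta> k \<inter> ball x r) (cores_meeting_ball x r)"
      unfolding disjoint_family_on_def
    proof (intro ballI impI)
      fix m n assume "m \<in> cores_meeting_ball x r" "n \<in> cores_meeting_ball x r" "m \<noteq> n"
      then have "grid_core \<delta> m \<inter> grid_core \<delta> n = {}"
        using I_PiE charged_subset
        by (intro disjoint_grid_cores[OF _ _ _ mesh_pos]) (auto simp: cores_meeting_ball_def)
      then show "grid_core \<delta> m \<inter> ball x r \<inter> (grid_core \<delta> n \<inter> ball x r) = {}"
        by auto
    qed
    show "emeasure lborel (grid_core \<delta> k \<inter> ball x r) \<noteq> \<infinity>" for k
      using emeasure_mono[of "grid_core \<delta> k \<inter> ball x r" "grid_core \<delta> k" lborel]
      by (auto simp: emeasure_grid_core[OF mesh_pos] top_unique)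
  qed auto
  also have "\<dots> \<le> measure lborel (ball x r)"
  proof (rule measure_mono_fmeasurable)
    show "(\<Union>k\<in>cores_meeting_ball x r. grid_core \<delta> k \<inter> ball x r) \<in> sets lborel"
      using finite_cores_meeting_ball by (intro sets.finite_UN) auto
    show "ball x r \<in> fmeasurable lborel"
      by (intro fmeasurableI emeasure_lborel_ball_finite) simp
  qed auto
  also have "\<dots> \<le> (2 * r) ^ DIM('a)"
    using assms by (rule measure_lborel_ball_le)
  finally show ?thesis .
qed

lemma measure_reweighted_ball_le_small:
  assumes "0 < r"
  shows "measure reweighted (ball x r)
     \<le> measure \<mu> (ball x (r + DIM('a) * \<delta>)) / charged_mass * (4 * r / \<delta>) ^ DIM('a)"
proof -
  define c where "c = measure \<mu> (ball x (r + DIM('a) * \<delta>)) / (charged_mass * (\<delta>/2) ^ DIM('a))"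
  have weight_le: "core_weight k \<le> c" if "k \<in> cores_meeting_ball x r" for k
  proof -
    have "cell_mass k \<le> (\<Sum>k\<in>cores_meeting_ball x r. cell_mass k)"
      using that finite_cores_meeting_ball
      by (intro member_le_sum) (auto simp: cores_meeting_ball_def charged_def cell_mass_def)
    then have "cell_mass k \<le> measure \<mu> (ball x (r + DIM('a) * \<delta>))"
      using sum_cell_mass_cores_meeting_ball order_trans by blast
    then show ?thesis
      unfolding core_weight_def c_def using charged_mass_gt_half mesh_pos
      by (intro divide_right_mono) auto
  qed
  have "measure reweighted (ball x r)
      \<le> (\<Sum>k\<in>cores_meeting_ball x r. c * measure lborel (grid_core \<delta> k \<inter> ball x r))"
    unfolding measure_reweighted_ball using weight_le by (intro sum_mono mult_right_mono) auto
  also have "\<dots> = c * (\<Sum>k\<in>cores_meeting_ball x r. measure lborel (grid_core \<delta> k \<inter> ball x r))"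
    by (simp add: sum_distrib_left)
  also have "\<dots> \<le> c * (2 * r) ^ DIM('a)"
    using sum_measure_cores_Int_ball_le[OF assms] charged_mass_gt_half mesh_pos
    by (intro mult_left_mono) (simp_all add: c_def)
  also have "\<dots> = measure \<mu> (ball x (r + DIM('a) * \<delta>)) / charged_mass * ((2 * r) / (\<delta>/2)) ^ DIM('a)"
    by (simp add: c_def power_divide) (simp flip: power_mult_distrib)
  also have "(2 * r) / (\<delta>/2) = 4 * r / \<delta>"
    by simp
  finally show ?thesis .
qed

lemma measure_reweighted_ball_powr_estimate:
  assumes "0 < r" "0 \<le> s" "s \<le> real DIM('a)" "0 < measure reweighted (ball x r)"
  shows "0 < measure \<mu> (ball x (r + DIM('a) * \<delta>))"
    and "charged_mass / (4 ^ DIM('a) * (1 + real DIM('a)) powr s) *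
        ((r + DIM('a) * \<delta>) powr s / measure \<mu> (ball x (r + DIM('a) * \<delta>)))
      \<le> r powr s / measure reweighted (ball x r)"
proof -
  define K where "K = 4 ^ DIM('a) * (1 + real DIM('a)) powr s"
  define \<rho> where "\<rho> = r + DIM('a) * \<delta>"
  define p where "p = measure \<mu> (ball x \<rho>)"
  define e where "e = measure reweighted (ball x r)"
  have "0 < K" "0 < e"
    using assms(4) by (simp_all add: K_def e_def)
  have e_le: "e \<le> p / charged_mass"
    using measure_reweighted_ball_le by (simp add: e_def p_def \<rho>_def)
  have e_le_small: "e \<le> p / charged_mass * (4 * r / \<delta>) ^ DIM('a)"
    using measure_reweighted_ball_le_small[OF assms(1)] by (simp add: e_def p_def \<rho>_def)
  have "0 < p / charged_mass"
    using e_le \<open>0 < e\<close> by linarith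
  then have "0 < p"
    using charged_mass_gt_half by (simp add: zero_less_divide_iff)
  then show "0 < measure \<mu> (ball x (r + DIM('a) * \<delta>))"
    by (simp add: p_def \<rho>_def)
  define q where "q = e * charged_mass / p"
  have "q \<le> 1"
    using e_le \<open>0 < p\<close> charged_mass_gt_half by (simp add: q_def field_simps)
  have "e * charged_mass \<le> p / charged_mass * (4 * r / \<delta>) ^ DIM('a) * charged_mass"
    using e_le_small charged_mass_gt_half by (intro mult_right_mono) auto
  then have "q \<le> (4 * r / \<delta>) ^ DIM('a)"
    using \<open>0 < p\<close> charged_mass_gt_half by (simp add: q_def pos_divide_le_eq mult.commute)
  have "\<rho> powr s * q \<le> K * r powr s"
    unfolding \<rho>_def K_def
    using \<open>0 < e\<close> \<open>0 < p\<close> charged_mass_gt_half \<open>q \<le> 1\<close> \<open>q \<le> (4 * r / \<delta>) ^ DIM('a)\<close>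
    by (intro powr_radius_estimate[OF assms(2,3) mesh_pos assms(1)]) (simp_all add: q_def)
  then have "\<rho> powr s * q / (K * e) \<le> K * r powr s / (K * e)"
    using \<open>0 < e\<close> \<open>0 < K\<close> by (intro divide_right_mono) auto
  also have "\<rho> powr s * q / (K * e) = charged_mass / K * (\<rho> powr s / p)"
    using \<open>0 < e\<close> \<open>0 < p\<close> \<open>0 < K\<close> by (simp add: q_def field_simps)
  also have "K * r powr s / (K * e) = r powr s / e"
    using \<open>0 < K\<close> by simp
  finally show "charged_mass / (4 ^ DIM('a) * (1 + real DIM('a)) powr s) *
        ((r + DIM('a) * \<delta>) powr s / measure \<mu> (ball x (r + DIM('a) * \<delta>)))
      \<le> r powr s / measure reweighted (ball x r)"
    by (simp add: K_def \<rho>_def p_def e_def)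
qed

lemma ball_ratio_le_reweighted_ratio:
  assumes "E \<in> sets borel" "x \<in> E" "0 < r" "0 \<le> s" "s \<le> real DIM('a)"
  shows "ennreal (charged_mass / (4 ^ DIM('a) * (1 + real DIM('a)) powr s)) * ball_ratio s \<mu> E
     \<le> ennreal (r powr s) / emeasure reweighted (E \<inter> ball x r)"
proof -
  interpret \<eta>: prob_space reweighted
    by (rule prob_space_reweighted)
  define c where "c = charged_mass / (4 ^ DIM('a) * (1 + real DIM('a)) powr s)"
  define \<rho> where "\<rho> = r + DIM('a) * \<delta>"
  define p where "p = measure \<mu> (ball x \<rho>)"
  define e' where "e' = measure reweighted (E \<inter> ball x r)"
  have "e' \<le> measure reweighted (ball x r)"
    using assms(1) by (auto simp: e'_def intro!: \<eta>.finite_measure_mono)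
  show ?thesis
  proof (cases "e' = 0")
    case True
    then have "emeasure reweighted (E \<inter> ball x r) = 0"
      by (simp add: e'_def \<eta>.emeasure_eq_measure)
    then show ?thesis
      using assms(3) by (simp add: ennreal_divide_zero)
  next
    case False
    then have "0 < e'"
      by (simp add: e'_def less_le)
    then have "0 < measure reweighted (ball x r)"
      using \<open>e' \<le> measure reweighted (ball x r)\<close> by linarith
    note estimate = measure_reweighted_ball_powr_estimate[OF assms(3-5) this]
    have "0 < p"
      using estimate(1) by (simp add: \<rho>_def p_def)
    have "c * (\<rho> powr s / p) \<le> r powr s / measure reweighted (ball x r)"
      using estimate(2) by (simp add: c_def \<rho>_def p_def)
    also have "\<dots> \<le> r powr s / e'"
      using \<open>0 < e'\<close> \<open>e' \<le> measure reweighted (ball x r)\<close> by (simp add: frac_le)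
    finally have key: "c * (\<rho> powr s / p) \<le> r powr s / e'" .
    have "ball_ratio s \<mu> E \<le> ennreal (\<rho> powr s) / emeasure \<mu> (ball x \<rho>)"
      using assms(2,3) mesh_pos by (intro ball_ratio_le) (auto simp: \<rho>_def add_pos_nonneg)
    also have "\<dots> = ennreal (\<rho> powr s / p)"
      using \<open>0 < p\<close> by (simp add: p_def emeasure_eq_measure divide_ennreal)
    finally have "ennreal c * ball_ratio s \<mu> E \<le> ennreal c * ennreal (\<rho> powr s / p)"
      by (rule mult_left_mono) simp
    also have "\<dots> = ennreal (c * (\<rho> powr s / p))"
      using charged_mass_gt_half \<open>0 < p\<close> by (intro ennreal_mult[symmetric]) (auto simp: c_def)
    also have "\<dots> \<le> ennreal (r powr s / e')"
      using key by (rule ennreal_leI)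
    also have "\<dots> = ennreal (r powr s) / emeasure reweighted (E \<inter> ball x r)"
      using \<open>0 < e'\<close> by (simp add: e'_def \<eta>.emeasure_eq_measure divide_ennreal)
    finally show ?thesis
      by (simp add: c_def)
  qed
qed

lemma ball_ratio_le_reweighted:
  assumes "E \<in> sets borel" "0 \<le> s" "s \<le> real DIM('a)"
  shows "ball_ratio s \<mu> E \<le> ennreal (2 * 4 ^ DIM('a) * (1 + real DIM('a)) powr s) *
    (INF x\<in>E. INF r\<in>{0<..}. ennreal (r powr s) / emeasure reweighted (E \<inter> ball x r))"
proof -
  define K where "K = 4 ^ DIM('a) * (1 + real DIM('a)) powr s"
  have "0 < K"
    by (simp add: K_def)
  have scaled: "ennreal (charged_mass / K) * ball_ratio s \<mu> E
      \<le> (INF x\<in>E. INF r\<in>{0<..}. ennreal (r powr s) / emeasure reweighted (E \<inter> ball x r))"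
    unfolding K_def
    by (intro INF_greatest ball_ratio_le_reweighted_ratio[OF assms(1) _ _ assms(2,3)]) auto
  have "ennreal 1 \<le> ennreal (2 * charged_mass)"
    using charged_mass_gt_half by (intro ennreal_leI) simp
  then have "ball_ratio s \<mu> E \<le> ennreal (2 * charged_mass) * ball_ratio s \<mu> E"
    using mult_right_mono[of 1 "ennreal (2 * charged_mass)" "ball_ratio s \<mu> E"] by simp
  also have "2 * charged_mass = 2 * K * (charged_mass / K)"
    using \<open>0 < K\<close> by simp
  also have "ennreal (2 * K * (charged_mass / K)) = ennreal (2 * K) * ennreal (charged_mass / K)"
    using \<open>0 < K\<close> charged_mass_gt_half by (intro ennreal_mult) auto
  also have "\<dots> * ball_ratio s \<mu> E = ennreal (2 * K) * (ennreal (charged_mass / K) * ball_ratio s \<mu> E)"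
    by (rule mult.assoc)
  also have "\<dots> \<le> ennreal (2 * K) *
      (INF x\<in>E. INF r\<in>{0<..}. ennreal (r powr s) / emeasure reweighted (E \<inter> ball x r))"
    using scaled by (rule mult_left_mono) simp
  finally show ?thesis
    by (simp add: K_def mult.assoc)
qed

end

definition cube_density_measure :: "'a::euclidean_space set \<Rightarrow> ('a \<Rightarrow> real) \<Rightarrow> 'a measure \<Rightarrow> 'a set set \<Rightarrow> bool" where
  "cube_density_measure E f \<eta> C \<longleftrightarrow>
     f \<in> borel_measurable lborel \<and> (\<forall>x. 0 \<le> f x) \<and> bounded (range f) \<and>
     \<eta> = density lborel (\<lambda>x. ennreal (f x)) \<and> prob_space \<eta> \<and>
     finite C \<and> (\<forall>Q\<in>C. is_cube Q \<and> Q \<subseteq> E) \<and> pairwise disjnt C \<and> msupport \<eta> = \<Union>C"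

lemma exists_cube_density_measure:
  fixes E :: "'a::euclidean_space set"
  assumes E: "open E" "bounded E"
    and \<mu>: "sets \<mu> = sets borel" "prob_space \<mu>" "emeasure \<mu> (UNIV - E) = 0"
    and s: "0 \<le> s" "s \<le> real DIM('a)"
  shows "\<exists>f \<eta> C. cube_density_measure E f \<eta> C \<and>
    ball_ratio s \<mu> E \<le> ennreal (2 * 4 ^ DIM('a) * (1 + real DIM('a)) powr s) *
      (INF x\<in>E. INF r\<in>{0<..}. ennreal (r powr s) / emeasure \<eta> (E \<inter> ball x r))"
proof -
  have "ennreal (1/2) < ennreal 1"
    by (rule ennreal_lessI) simp_all
  also have "ennreal 1 = emeasure \<mu> E"
    using emeasure_eq_1_if_null_compl[OF \<mu>(2,1) _ \<mu>(3)] E(1) by simp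
  finally obtain \<delta> where \<delta>: "0 < \<delta>"
    "ennreal (1/2) < emeasure \<mu> (\<Union>k\<in>inner_grid \<delta> E. grid_cell \<delta> k)"
    by (rule emeasure_inner_grid_approx[OF \<mu>(1) E(1)])
  interpret grid_reweighting \<mu> \<delta> "inner_grid \<delta> E"
    by (intro grid_reweighting.intro grid_reweighting_axioms.intro \<mu>(1,2) \<delta>
        finite_inner_grid[OF E(2) \<delta>(1)]) (auto simp: inner_grid_def)
  have "grid_core \<delta> k \<subseteq> E" if "k \<in> charged" for k
    using that charged_subset grid_core_subset_cube[OF \<delta>(1), of k] by (auto simp: inner_grid_def)
  then have cores_in_E: "\<forall>Q\<in>grid_core \<delta> ` charged. is_cube Q \<and> Q \<subseteq> E"
    using is_cube_grid_core[OF \<delta>(1)] by blast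
  have "pairwise disjnt (grid_core \<delta> ` charged)"
  proof (rule pairwise_imageI)
    fix k k' assume "k \<in> charged" "k' \<in> charged" "k \<noteq> k'"
    then show "disjnt (grid_core \<delta> k) (grid_core \<delta> k')"
      using charged_subset disjoint_grid_cores[OF _ _ _ \<delta>(1), of k k']
      by (auto simp: disjnt_def inner_grid_def)
  qed
  then have "cube_density_measure E core_density reweighted (grid_core \<delta> ` charged)"
    unfolding cube_density_measure_def
    using core_density_measurable core_density_nonneg bounded_range_core_density
      prob_space_reweighted finite_charged cores_in_E msupport_reweighted
    by blast
  moreover have "ball_ratio s \<mu> E \<le> ennreal (2 * 4 ^ DIM('a) * (1 + real DIM('a)) powr s) *
      (INF x\<in>E. INF r\<in>{0<..}. ennreal (r powr s) / emeasure reweighted (E \<inter> ball x r))"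
    using E(1) s by (intro ball_ratio_le_reweighted) auto
  ultimately show ?thesis
    by blast
qed

lemma exists_admissible_near_gsvf:
  fixes E :: "'a::euclidean_space set"
  assumes "E \<in> sets borel" "bounded E" "E \<noteq> {}"
  obtains \<mu> where "sets \<mu> = sets borel" "prob_space \<mu>" "emeasure \<mu> (UNIV - E) = 0"
    "gsvf s E \<le> 2 * ball_ratio s \<mu> E"
proof -
  define admissible where
    "admissible = {\<mu> :: 'a measure. sets \<mu> = sets borel \<and> prob_space \<mu> \<and> emeasure \<mu> (UNIV - E) = 0}"
  obtain x R where "x \<in> E" "E \<subseteq> ball x R"
    using assms(2,3) bounded_subset_ballD by blast
  then have "return borel x \<in> admissible" and "gsvf s E < \<infinity>"
    using assms(1) gsvf_le_radius_powr[of E x R s]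
    by (auto simp: admissible_def prob_space_return sets.Diff order_le_less_trans)
  moreover have "gsvf s E = (SUP \<mu>\<in>admissible. ball_ratio s \<mu> E)"
    by (simp add: gsvf_def ball_ratio_def admissible_def)
  ultimately obtain \<mu> where "\<mu> \<in> admissible" "gsvf s E \<le> 2 * ball_ratio s \<mu> E"
    using ex_SUP_le_2_mult[of admissible] by auto
  then show thesis
    using that by (auto simp: admissible_def)
qed

theorem lemma2p3:
  fixes s :: real
  assumes "0 \<le> s" and "s \<le> real DIM('a::euclidean_space)"
  shows "\<exists>\<kappa>1 > 0. \<forall>E :: 'a set. open E \<and> bounded E \<and> E \<noteq> {} \<longrightarrow>
    (\<exists>(f :: 'a \<Rightarrow> real) \<eta> C.
       f \<in> borel_measurable lborel \<and> (\<forall>x. 0 \<le> f x) \<and> bounded (range f) \<and>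
       \<eta> = density lborel (\<lambda>x. ennreal (f x)) \<and> prob_space \<eta> \<and>
       finite C \<and> (\<forall>Q\<in>C. is_cube Q \<and> Q \<subseteq> E) \<and> pairwise disjnt C \<and>
       msupport \<eta> = \<Union>C \<and>
       gsvf s E \<le> ennreal \<kappa>1 *
         (INF x\<in>E. INF r\<in>{0<..}. ennreal (r powr s) / emeasure \<eta> (E \<inter> ball x r)))"
proof (intro exI[of _ "2 * (2 * 4 ^ DIM('a) * (1 + real DIM('a)) powr s)"] conjI allI impI)
  define k where "k = 2 * 4 ^ DIM('a) * (1 + real DIM('a)) powr s"
  fix E :: "'a set"
  assume E: "open E \<and> bounded E \<and> E \<noteq> {}"
  then obtain \<mu> where \<mu>: "sets \<mu> = sets borel" "prob_space \<mu>" "emeasure \<mu> (UNIV - E) = 0"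
    and near: "gsvf s E \<le> 2 * ball_ratio s \<mu> E"
    by (auto intro: exists_admissible_near_gsvf[of E s])
  obtain f \<eta> C where "cube_density_measure E f \<eta> C"
    and ratio: "ball_ratio s \<mu> E \<le> ennreal k *
      (INF x\<in>E. INF r\<in>{0<..}. ennreal (r powr s) / emeasure \<eta> (E \<inter> ball x r))"
    using exists_cube_density_measure[OF _ _ \<mu> assms] E by (auto simp: k_def)
  moreover have "gsvf s E \<le> ennreal (2 * k) *
      (INF x\<in>E. INF r\<in>{0<..}. ennreal (r powr s) / emeasure \<eta> (E \<inter> ball x r))"
    using order_trans[OF near mult_left_mono[OF ratio]]
    by (simp add: k_def ennreal_mult mult.assoc)
  ultimately show "\<exists>(f :: 'a \<Rightarrow> real) \<eta> C.
       f \<in> borel_measurable lborel \<and> (\<forall>x. 0 \<le> f x) \<and> bounded (range f) \<and>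
       \<eta> = density lborel (\<lambda>x. ennreal (f x)) \<and> prob_space \<eta> \<and>
       finite C \<and> (\<forall>Q\<in>C. is_cube Q \<and> Q \<subseteq> E) \<and> pairwise disjnt C \<and>
       msupport \<eta> = \<Union>C \<and>
       gsvf s E \<le> ennreal (2 * (2 * 4 ^ DIM('a) * (1 + real DIM('a)) powr s)) *
         (INF x\<in>E. INF r\<in>{0<..}. ennreal (r powr s) / emeasure \<eta> (E \<inter> ball x r))"
    unfolding cube_density_measure_def k_def by blast
qed simp

end
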